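(* Let $k\ge1$, $a_1,\dots,a_k>0$, $a=a_1+\dots+a_k$, $Q>0$, $\sigma\ge 1/2$, and real $t_1,\dots,t_k$ with $|t_i|\le X^Q$ be fixed, and let $X$ be large. Let $M,N$ be constants depending only on $(a_1,\dots,a_k)$, with $N$ sufficiently large. With the notation below, $$\sum_{p\in\mathcal S(0)}(\log p)\,\Phi\Big(\frac pX\Big)\ll_{a_1,\dots,a_k} X e^{-(\log\log X)^2}.$$
   Context: $\chi^{(d)}=\left(\frac{d}{\cdot}\right)$ is the Kronecker symbol; $q$ denotes primes. $\Phi$ is a non-negative smooth function with $\Phi\le1$ on $[1/4,1/2]\cup[1,3/2]$, $\Phi=1$ on $[1/2,1]$, $\Phi=0$ otherwise. Put $h(n)=\frac12\Re\big(\sum_{m=1}^k a_m n^{-it_m}\big)$. Let $\beta_0=0$ and, for $j\ge1$, $\beta_j=20^{j-1}/(\log\log X)^2$, $s_j=2\lfloor e^N\beta_j^{-3/4}\rfloor$, $h_j=s_j/100$; let $\mathcal J=1+\max\{j:\beta_j\le 10^{-M}\}$. For $1\le i\le j\le\mathcal J$ and odd prime $p$ define $$a\mathcal G_{i,j}(p)=\sum_{X^{\beta_{i-1}}<q\le X^{\beta_i}}\frac{2h(q)\chi^{(8p)}(q)}{q^{1/2+\max(\sigma-1/2,\,1/\log X^{\beta_j})}}\cdot\frac{\log(X^{\beta_j}/q)}{\log X^{\beta_j}}.$$ $\mathcal S(0)$ is the set of odd primes $p$ such that $|a\mathcal G_{1,l}(p)|>h_1$ for some $1\le l\le\mathcal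 J$. *)

theory Defs
  imports "HOL-Analysis.Analysis" "HOL-Number_Theory.Number_Theory"
begin

definition kronecker_prime :: "int \<Rightarrow> nat \<Rightarrow> int" where
  "kronecker_prime d q =
     (if q = 2 then (if even d then 0 else if d mod 8 = 1 \<or> d mod 8 = 7 then 1 else -1)
      else Legendre d (int q))"

definition hfun :: "nat \<Rightarrow> (nat \<Rightarrow> real) \<Rightarrow> (nat \<Rightarrow> real) \<Rightarrow> nat \<Rightarrow> real" where
  "hfun k a t n = (1/2) * Re (\<Sum>m=1..k. complex_of_real (a m) *
        (of_nat n :: complex) powr (- (\<i> * complex_of_real (t m))))"

definition beta :: "real \<Rightarrow> nat \<Rightarrow> real" where
  "beta X j = (if j = 0 then 0 else 20 ^ (j - 1) / (ln (ln X))\<^sup>2)"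

definition s_idx :: "real \<Rightarrow> real \<Rightarrow> nat \<Rightarrow> int" where
  "s_idx X N j = 2 * \<lfloor>exp N * beta X j powr (-3/4)\<rfloor>"

definition h_idx :: "real \<Rightarrow> real \<Rightarrow> nat \<Rightarrow> real" where
  "h_idx X N j = real_of_int (s_idx X N j) / 100"

definition Jcal :: "real \<Rightarrow> real \<Rightarrow> nat" where
  "Jcal X M = 1 + Max {j. 1 \<le> j \<and> beta X j \<le> 10 powr (-M)}"

definition aG :: "nat \<Rightarrow> (nat \<Rightarrow> real) \<Rightarrow> (nat \<Rightarrow> real) \<Rightarrow> real \<Rightarrow> real \<Rightarrow> nat \<Rightarrow> nat \<Rightarrow> nat \<Rightarrow> real" where
  "aG k a t \<sigma> X i j p =
     (\<Sum>q\<in>{q::nat. prime q \<and> X powr beta X (i - 1) < real q \<and> real q \<le> X powr beta X i}.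
        2 * hfun k a t q * real_of_int (kronecker_prime (8 * int p) q)
          / real q powr (1/2 + max (\<sigma> - 1/2) (1 / ln (X powr beta X j)))
          * (ln (X powr beta X j / real q) / ln (X powr beta X j)))"

definition S0 :: "nat \<Rightarrow> (nat \<Rightarrow> real) \<Rightarrow> (nat \<Rightarrow> real) \<Rightarrow> real \<Rightarrow> real \<Rightarrow> real \<Rightarrow> real \<Rightarrow> nat set" where
  "S0 k a t \<sigma> X M N = {p. prime p \<and> odd p \<and>
      (\<exists>l\<in>{1..Jcal X M}. \<bar>aG k a t \<sigma> X 1 l p\<bar> > h_idx X N 1)}"

definition smooth_fun :: "(real \<Rightarrow> real) \<Rightarrow> bool" where
  "smooth_fun f \<longleftrightarrow> (\<forall>n. ((deriv ^^ n) f) differentiable_on UNIV)"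

end

(*
  For odd primes q the Kronecker symbol of 8p at q is the Legendre symbol of 8p modulo q, so
  aG(1,l)(p) is a character sum  F(p) = sum_{2 < q <= Y} c_q (8p / q)  with Y = X^(1/L^2),
  L = log log X and |c_q| <= A / sqrt q. Expanding the 2m-th power of F, a product of
  characters in which some prime occurs an odd number of times is a character of period at
  most Y^(2m) whose sums over full periods vanish; only the "paired" products survive, and
  they give sum_{p < Z} F(p)^(2m) <= Z (2m sum c_q^2)^m + (Y sum |c_q|)^(2m).
  By a weak Mertens estimate sum c_q^2 << A^2 L, while h_1^2 >> e^(2N) L^3, so for N large and
  m ~ L^2/8 Markov's inequality leaves at most X e^(-3 L^2 + O(1)) + X^(1/2 + o(1)) primes with
  |aG(1,l)(p)| > h_1. Summing over the O(L^2) indices l and weighting by log p gives the bound.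
*)
theory Submission
  imports Defs "HOL-Real_Asymp.Real_Asymp"
begin

section \<open>The quadratic characters\<close>

lemma Legendre_cong:
  assumes "[a = b] (mod p)"
  shows "Legendre a p = Legendre b p"
proof -
  have "[a = 0] (mod p) \<longleftrightarrow> [b = 0] (mod p)" and "QuadRes p a \<longleftrightarrow> QuadRes p b"
    unfolding QuadRes_def using assms cong_sym cong_trans by blast+
  then show ?thesis unfolding Legendre_def by simp
qed

lemma Legendre_values: "Legendre a p \<in> {-1, 0, 1}"
  unfolding Legendre_def by auto

lemma Legendre_mult:
  fixes p :: nat
  assumes "prime p" "2 < p"
  shows "Legendre (a * b) (int p) = Legendre a p * Legendre b p"
proof -
  have "[Legendre (a*b) p = (a*b) ^ ((p - 1) div 2)] (mod p)"
    using euler_criterion assms by blast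
  moreover have "[Legendre a p * Legendre b p = a ^ ((p - 1) div 2) * b ^ ((p - 1) div 2)] (mod p)"
    using euler_criterion[OF assms, of a] euler_criterion[OF assms, of b] cong_mult by blast
  ultimately have c: "[Legendre (a*b) p = Legendre a p * Legendre b p] (mod p)"
    by (metis cong_sym cong_trans power_mult_distrib)
  have "\<bar>Legendre (a*b) p - Legendre a p * Legendre b p\<bar> < int p"
    using Legendre_values[of "a*b" p] Legendre_values[of a p] Legendre_values[of b p] assms(2) by auto
  moreover have "int p dvd (Legendre (a*b) p - Legendre a p * Legendre b p)"
    using c by (simp add: cong_iff_dvd_diff dvd_diff_commute)
  ultimately show ?thesis
    by (metis abs_of_nat dvd_imp_le_int eq_iff_diff_eq_0 not_le)
qed

text \<open>A primitive root cannot be a square: by Euler's criterion its order would divide \<open>(p - 1) / 2\<close>.\<close>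
lemma Legendre_eq_minus_one_exists:
  fixes p :: nat
  assumes p: "prime p" "2 < p"
  obtains g where "Legendre g (int p) = -1"
proof -
  obtain g where g: "residue_primroot p g"
    using prime_primitive_root_exists[of p] p by auto
  have ord: "ord p g = p - 1" and cop: "coprime p g"
    using g p by (auto simp: residue_primroot_def totient_prime)
  have "\<not> [int g = 0] (mod int p)"
    using cop p by (auto simp: cong_0_iff prime_nat_iff coprime_commute)
  moreover have "Legendre (int g) (int p) \<noteq> 1"
  proof
    assume "Legendre (int g) (int p) = 1"
    then have "[int g ^ ((p - 1) div 2) = 1] (mod int p)"
      using euler_criterion[OF p, of "int g"] by (simp add: cong_sym)
    then have "[g ^ ((p - 1) div 2) = 1] (mod p)"
      by (metis cong_int_iff of_nat_1 of_nat_power)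
    then have "p - 1 dvd (p - 1) div 2"
      using ord ord_divides[of g "(p - 1) div 2" p] by simp
    then show False using p by (auto dest!: dvd_imp_le)
  qed
  ultimately have "Legendre (int g) (int p) = -1" unfolding Legendre_def by auto
  then show ?thesis by (rule that)
qed

text \<open>Multiplication by a non-residue permutes the residues and negates the sum.\<close>
lemma sum_Legendre_residues_eq_0:
  fixes p :: nat
  assumes "prime p" "2 < p"
  shows "(\<Sum>u\<in>{0..<int p}. Legendre u (int p)) = 0"
proof -
  obtain g where g: "Legendre g (int p) = -1" using Legendre_eq_minus_one_exists assms by blast
  have "\<not> int p dvd g" using g unfolding Legendre_def by (auto simp: cong_0_iff)
  then have cop: "coprime (int p) g" using assms(1) by (intro prime_imp_coprime) simp_all
  have inj: "inj_on (\<lambda>u. g * u mod int p) {0..<int p}"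
  proof
    fix u v assume uv: "u \<in> {0..<int p}" "v \<in> {0..<int p}" "g * u mod int p = g * v mod int p"
    then have "[g * u = g * v] (mod int p)" by (simp add: cong_def)
    then have "[u = v] (mod int p)" using cop by (simp add: cong_mult_lcancel coprime_commute)
    then show "u = v" using uv(1,2) by (simp add: cong_def)
  qed
  have im: "(\<lambda>u. g * u mod int p) ` {0..<int p} = {0..<int p}"
    using assms by (intro endo_inj_surj inj) auto
  define S where "S = (\<Sum>u\<in>{0..<int p}. Legendre u (int p))"
  have "S = (\<Sum>u\<in>{0..<int p}. Legendre ((g * u) mod int p) (int p))"
    unfolding S_def by (subst im[symmetric]) (rule sum.reindex[OF inj, unfolded comp_def])
  also have "\<dots> = (\<Sum>u\<in>{0..<int p}. Legendre g (int p) * Legendre u (int p))"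
  proof (intro sum.cong refl)
    fix u
    have "Legendre ((g * u) mod int p) (int p) = Legendre (g * u) (int p)"
      by (rule Legendre_cong) (simp add: cong_def)
    then show "Legendre ((g * u) mod int p) (int p) = Legendre g (int p) * Legendre u (int p)"
      by (simp add: Legendre_mult[OF assms])
  qed
  also have "\<dots> = - S" unfolding S_def g by (simp add: sum_negf)
  finally show ?thesis unfolding S_def by simp
qed

text \<open>\<open>legendre8 q n\<close> is the Kronecker symbol \<open>\<chi>\<^bsup>(8n)\<^esup>(q)\<close> of the paper for an odd prime \<open>q\<close>,
  viewed as a function of \<open>n\<close>.\<close>
definition legendre8 :: "nat \<Rightarrow> nat \<Rightarrow> real" where
  "legendre8 q n = real_of_int (Legendre (8 * int n) (int q))"

lemma abs_legendre8_le: "\<bar>legendre8 q n\<bar> \<le> 1"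
  using Legendre_values[of "8 * int n" "int q"] unfolding legendre8_def by auto

lemma legendre8_odd_power: "odd k \<Longrightarrow> legendre8 q n ^ k = legendre8 q n"
  using Legendre_values[of "8 * int n" "int q"] odd_pos[of k] by (auto simp: legendre8_def)

lemma legendre8_add_period:
  assumes "q dvd T"
  shows "legendre8 q (n + T) = legendre8 q n"
proof -
  have "[8 * int (n + T) = 8 * int n] (mod int q)"
    using assms by (auto simp: cong_iff_dvd_diff algebra_simps)
  then show ?thesis unfolding legendre8_def by (simp add: Legendre_cong)
qed

lemma sum_legendre8_progression_eq_0:
  assumes "prime q" "2 < q" "coprime R q"
  shows "(\<Sum>j<q. legendre8 q (v + j * R)) = 0"
proof -
  have "odd q" using assms prime_odd_nat by blast
  then have cop8: "coprime (8 * R) q"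
    using assms(3) coprime_power_left_iff[of 2 3 q] by (simp add: coprime_commute)
  define g where "g = (\<lambda>j. (8 * (v + j * R)) mod q)"
  have inj: "inj_on g {..<q}"
  proof
    fix i j assume ij: "i \<in> {..<q}" "j \<in> {..<q}" "g i = g j"
    then have "[8 * v + (8 * R) * i = 8 * v + (8*R) * j] (mod q)"
      unfolding g_def cong_def by (simp add: algebra_simps)
    then have "[i = j] (mod q)"
      using cop8 by (simp add: cong_add_lcancel_nat cong_mult_lcancel_nat coprime_commute)
    then show "i = j" using ij(1,2) by (simp add: cong_def)
  qed
  have im: "g ` {..<q} = {..<q}"
    using assms by (intro endo_inj_surj inj) (auto simp: g_def prime_gt_0_nat)
  have "(\<Sum>j<q. legendre8 q (v + j * R)) = (\<Sum>j<q. real_of_int (Legendre (int (g j)) (int q)))"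
    unfolding legendre8_def g_def by (intro sum.cong refl Legendre_cong arg_cong[of _ _ real_of_int])
      (simp add: cong_def of_nat_mod)
  also have "\<dots> = (\<Sum>u<q. real_of_int (Legendre (int u) (int q)))"
    by (subst im[symmetric]) (rule sum.reindex[OF inj, unfolded comp_def, symmetric])
  also have "\<dots> = real_of_int (\<Sum>u\<in>int ` {..<q}. Legendre u (int q))"
    by (simp add: sum.reindex)
  also have "int ` {..<q} = {0..<int q}"
    by (simp add: lessThan_atLeast0 image_int_atLeastLessThan)
  finally show ?thesis by (simp add: sum_Legendre_residues_eq_0[OF assms(1,2)])
qed

lemma sum_lessThan_mult_residues:
  fixes f :: "nat \<Rightarrow> 'a::comm_monoid_add"
  shows "(\<Sum>n<a * b. f n) = (\<Sum>v<b. \<Sum>j<a. f (v + j * b))"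
proof -
  have "(\<Sum>n<a * b. f n) = (\<Sum>j<a. \<Sum>v<b. f (v + j * b))"
    using sum.nat_group[of f b a] sum.shift_bounds_nat_ivl[of f 0 "_ * b" b]
    by (simp add: atLeast0LessThan add.commute mult.commute)
  also have "\<dots> = (\<Sum>v<b. \<Sum>j<a. f (v + j * b))"
    by (rule sum.swap)
  finally show ?thesis .
qed

lemma abs_sum_periodic_le:
  fixes f :: "nat \<Rightarrow> real"
  assumes T: "0 < T" and per: "\<And>n. f (n + T) = f n" and z: "(\<Sum>n<T. f n) = 0"
    and b: "\<And>n. \<bar>f n\<bar> \<le> 1"
  shows "\<bar>\<Sum>n<Z. f n\<bar> \<le> real T"
proof -
  have perk: "f (n + k * T) = f n" for n k
    by (induction k) (simp_all add: add.assoc[symmetric] per add.commute[of T])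
  have full: "(\<Sum>n<k * T. f n) = 0" for k
  proof -
    have "(\<Sum>n<k * T. f n) = (\<Sum>v<T. \<Sum>j<k. f v)"
      by (simp add: sum_lessThan_mult_residues perk)
    also have "\<dots> = real k * (\<Sum>v<T. f v)"
      by (simp add: sum_distrib_left)
    finally show ?thesis using z by simp
  qed
  define k r where "k = Z div T" and "r = Z mod T"
  have "Z = k * T + r" and r: "r < T"
    using T unfolding k_def r_def by simp_all
  then have Z: "{..<Z} = {..<k*T} \<union> {k*T..<k*T+r}" by auto
  have "(\<Sum>n<Z. f n) = (\<Sum>n\<in>{k*T..<k*T+r}. f n)"
    unfolding Z by (simp add: sum.union_disjoint ivl_disj_int full)
  also have "\<dots> = (\<Sum>n<r. f n)"
    using sum.shift_bounds_nat_ivl[of f 0 "k*T" r] by (simp add: atLeast0LessThan add.commute perk)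
  finally have "\<bar>\<Sum>n<Z. f n\<bar> \<le> (\<Sum>n<r. \<bar>f n\<bar>)" by (simp add: sum_abs)
  also have "\<dots> \<le> real r" using sum_mono[of "{..<r}" "\<lambda>n. \<bar>f n\<bar>" "\<lambda>_. 1"] b by simp
  finally show ?thesis using r by simp
qed

definition legendre8_prod :: "nat list \<Rightarrow> nat \<Rightarrow> real" where
  "legendre8_prod qs n = (\<Prod>q\<leftarrow>qs. legendre8 q n)"

lemma abs_legendre8_prod_le: "\<bar>legendre8_prod qs n\<bar> \<le> 1"
proof (induction qs)
  case (Cons q qs)
  then show ?case
    using abs_legendre8_le[of q n]
    by (simp add: legendre8_prod_def abs_mult mult_le_one)
qed (simp add: legendre8_prod_def)

lemma legendre8_prod_add_period:
  assumes "\<And>q. q \<in> set qs \<Longrightarrow> q dvd T"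
  shows "legendre8_prod qs (n + T) = legendre8_prod qs n"
  using assms unfolding legendre8_prod_def by (induction qs) (auto simp: legendre8_add_period)

lemma prod_list_map_split_count:
  fixes f :: "'a \<Rightarrow> 'b::comm_monoid_mult"
  shows "(\<Prod>y\<leftarrow>xs. f y) = f x ^ count_list xs x * (\<Prod>y\<leftarrow>filter (\<lambda>y. y \<noteq> x) xs. f y)"
  by (induction xs) (auto simp: algebra_simps)

text \<open>If some prime \<open>q\<^sub>0\<close> occurs an odd number of times, the product is a character of period
  \<open>q\<^sub>0 R\<close> whose sum over each period vanishes, because it runs through every residue class
  modulo \<open>q\<^sub>0\<close> against a factor of period \<open>R\<close> coprime to \<open>q\<^sub>0\<close>.\<close>
lemma abs_sum_legendre8_prod_le:
  assumes primes: "\<And>q. q \<in> set qs \<Longrightarrow> prime q \<and> 2 < q" and odd: "odd (count_list qs q\<^sub>0)"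
  shows "\<bar>\<Sum>n<Z. legendre8_prod qs n\<bar> \<le> real (prod_list qs)"
proof -
  have "q\<^sub>0 \<in> set qs" using odd by (metis count_notin even_zero)
  then have q\<^sub>0: "prime q\<^sub>0" "2 < q\<^sub>0" using primes by auto
  define rs where "rs = filter (\<lambda>y. y \<noteq> q\<^sub>0) qs"
  define R where "R = prod_list rs"
  have rs: "q \<in> set rs \<Longrightarrow> q \<in> set qs \<and> q \<noteq> q\<^sub>0" for q unfolding rs_def by auto
  have R_coprime: "coprime R q\<^sub>0"
    unfolding R_def
  proof (rule prod_list_coprime_left)
    fix q assume "q \<in> set rs"
    then have "prime q" "q \<noteq> q\<^sub>0" using rs primes by auto
    then show "coprime q q\<^sub>0" using q\<^sub>0(1) primes_coprime by blast
  qed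
  have "0 \<notin> set rs" using rs primes by (metis not_prime_0)
  then have "0 < R" unfolding R_def by (metis prod_list_zero_iff gr0I)
  define T where "T = q\<^sub>0 * R"
  have T: "0 < T" unfolding T_def using \<open>0 < R\<close> q\<^sub>0 by simp
  have dvd_T: "q dvd T" if "q \<in> set qs" for q
    using that prod_list_dvd[of q rs] unfolding T_def R_def rs_def by (cases "q = q\<^sub>0") auto
  have split: "legendre8_prod qs n = legendre8 q\<^sub>0 n * legendre8_prod rs n" for n
    unfolding legendre8_prod_def rs_def
    using prod_list_map_split_count[of "\<lambda>q. legendre8 q n" qs q\<^sub>0] legendre8_odd_power[OF odd] by simp
  have rs_period: "legendre8_prod rs (v + j * R) = legendre8_prod rs v" for v j
    by (rule legendre8_prod_add_period) (simp add: R_def prod_list_dvd)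
  have "(\<Sum>n<T. legendre8_prod qs n)
      = (\<Sum>v<R. legendre8_prod rs v * (\<Sum>j<q\<^sub>0. legendre8 q\<^sub>0 (v + j * R)))"
    unfolding T_def split sum_lessThan_mult_residues rs_period by (simp add: sum_distrib_left mult.commute)
  also have "\<dots> = 0" using sum_legendre8_progression_eq_0[OF q\<^sub>0 R_coprime] by simp
  finally have "\<bar>\<Sum>n<Z. legendre8_prod qs n\<bar> \<le> real T"
    by (intro abs_sum_periodic_le[OF T _ _ abs_legendre8_prod_le] legendre8_prod_add_period dvd_T)
  also have "T \<le> prod_list qs"
  proof -
    have "prod_list qs = q\<^sub>0 ^ count_list qs q\<^sub>0 * R"
      unfolding R_def rs_def using prod_list_map_split_count[of "\<lambda>q. q" qs q\<^sub>0] by simp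
    moreover have "q\<^sub>0 \<le> q\<^sub>0 ^ count_list qs q\<^sub>0"
      using self_le_power[of q\<^sub>0 "count_list qs q\<^sub>0"] odd_pos[OF odd] q\<^sub>0 by simp
    ultimately show ?thesis unfolding T_def using \<open>0 < R\<close> by simp
  qed
  finally show ?thesis by simp
qed

section \<open>High moments of character sums\<close>

definition lists_len :: "'a set \<Rightarrow> nat \<Rightarrow> 'a list set" where
  "lists_len P k = {xs. set xs \<subseteq> P \<and> length xs = k}"

lemma finite_lists_len: "finite P \<Longrightarrow> finite (lists_len P k)"
  unfolding lists_len_def by (rule finite_lists_length_eq)

lemma lists_len_0 [simp]: "lists_len P 0 = {[]}"
  unfolding lists_len_def by auto

lemma lists_len_Suc: "lists_len P (Suc k) = (\<lambda>(x, xs). x # xs) ` (P \<times> lists_len P k)"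
  unfolding lists_len_def by (auto simp: length_Suc_conv)

lemma sum_power_eq_sum_lists_len:
  fixes f :: "'a \<Rightarrow> 'b::comm_semiring_1"
  assumes "finite P"
  shows "(\<Sum>x\<in>P. f x) ^ k = (\<Sum>xs\<in>lists_len P k. \<Prod>x\<leftarrow>xs. f x)"
proof (induction k)
  case (Suc k)
  have "(\<Sum>xs\<in>lists_len P (Suc k). \<Prod>x\<leftarrow>xs. f x)
      = (\<Sum>(x, xs)\<in>P \<times> lists_len P k. f x * (\<Prod>x\<leftarrow>xs. f x))"
    unfolding lists_len_Suc by (subst sum.reindex) (auto simp: inj_on_def case_prod_beta)
  also have "\<dots> = (\<Sum>x\<in>P. f x) * (\<Sum>xs\<in>lists_len P k. \<Prod>x\<leftarrow>xs. f x)"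
    by (simp add: sum.cartesian_product[symmetric] sum_product)
  finally show ?case using Suc by simp
qed simp

definition paired :: "'a list \<Rightarrow> bool" where
  "paired xs \<longleftrightarrow> (\<forall>x. even (count_list xs x))"

definition paired_sum :: "'a set \<Rightarrow> ('a \<Rightarrow> real) \<Rightarrow> nat \<Rightarrow> real" where
  "paired_sum P w k = (\<Sum>xs\<in>{xs\<in>lists_len P k. paired xs}. \<Prod>x\<leftarrow>xs. w x)"

lemma paired_sum_0: "paired_sum P w 0 = 1"
  by (simp add: paired_sum_def paired_def Collect_conv_if)

definition insert_at :: "nat \<Rightarrow> 'a \<Rightarrow> 'a list \<Rightarrow> 'a list" where
  "insert_at j x xs = take j xs @ x # drop j xs"

lemma prod_list_map_insert_at:
  "(\<Prod>y\<leftarrow>insert_at j x xs. f y) = f x * (\<Prod>y\<leftarrow>xs. f y :: 'b::comm_monoid_mult)"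
  unfolding insert_at_def
  by (subst (2) append_take_drop_id[of j xs, symmetric])
    (simp only: map_append prod_list.append, simp add: ac_simps)

text \<open>A paired list of length \<open>k + 2\<close> is its head followed by a paired list of length \<open>k\<close> into
  which a second copy of the head has been inserted.\<close>
lemma paired_lists_Suc_Suc_subset:
  "{xs\<in>lists_len P (Suc (Suc k)). paired xs}
     \<subseteq> (\<lambda>(x, j, ws). x # insert_at j x ws) ` (P \<times> {..k} \<times> {ws\<in>lists_len P k. paired ws})"
proof
  fix zs assume "zs \<in> {xs\<in>lists_len P (Suc (Suc k)). paired xs}"
  then have zs: "set zs \<subseteq> P" "length zs = Suc (Suc k)" "paired zs"
    unfolding lists_len_def by auto
  then obtain x xs where zx: "zs = x # xs" by (metis length_Suc_conv)
  have "even (count_list zs x)" using zs(3) unfolding paired_def by blast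
  then have "odd (count_list xs x)" using zx by simp
  then have "x \<in> set xs" by (metis count_notin even_zero)
  then obtain ys ts where xs: "xs = ys @ x # ts" by (metis split_list)
  have "paired (ys @ ts)"
    unfolding paired_def
  proof
    fix y
    have "even (count_list zs y)" using zs(3) unfolding paired_def by blast
    moreover have "count_list zs y = count_list (ys @ ts) y + (if y = x then 2 else 0)"
      unfolding zx xs by simp
    ultimately show "even (count_list (ys @ ts) y)" by (simp split: if_splits)
  qed
  moreover have "x \<in> P" "length ys \<le> k" "ys @ ts \<in> lists_len P k"
    using zs(1,2) unfolding zx xs lists_len_def by auto
  moreover have "zs = x # insert_at (length ys) x (ys @ ts)"
    unfolding zx xs insert_at_def by simp
  ultimately show "zs \<in> (\<lambda>(x, j, ws). x # insert_at j x ws) ` (P \<times> {..k} \<times> {ws\<in>lists_len P k. paired ws})"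
    by (intro image_eqI[of _ _ "(x, length ys, ys @ ts)"]) auto
qed

lemma paired_sum_Suc_Suc_le:
  assumes fin: "finite P" and w: "\<And>x. 0 \<le> w x"
  shows "paired_sum P w (Suc (Suc k)) \<le> real (Suc k) * (\<Sum>x\<in>P. w x ^ 2) * paired_sum P w k"
proof -
  define B where "B = P \<times> {..k} \<times> {ws\<in>lists_len P k. paired ws}"
  define g :: "'a \<times> nat \<times> 'a list \<Rightarrow> 'a list" where "g = (\<lambda>(x, j, ws). x # insert_at j x ws)"
  have finB: "finite B" unfolding B_def using fin finite_lists_len[OF fin, of k] by simp
  have nonneg: "0 \<le> (\<Prod>x\<leftarrow>xs. w x)" for xs by (induction xs) (simp_all add: w)
  have "paired_sum P w (Suc (Suc k)) \<le> (\<Sum>zs\<in>g ` B. \<Prod>x\<leftarrow>zs. w x)"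
    unfolding paired_sum_def using paired_lists_Suc_Suc_subset[of P k] finB nonneg
    by (intro sum_mono2) (auto simp: B_def g_def)
  also have "\<dots> \<le> (\<Sum>b\<in>B. \<Prod>x\<leftarrow>g b. w x)"
    using sum_image_le[OF finB, of "\<lambda>zs. \<Prod>x\<leftarrow>zs. w x" g] nonneg by (simp add: comp_def)
  also have "\<dots> = (\<Sum>x\<in>P. \<Sum>j\<in>{..k}. \<Sum>ws\<in>{ws\<in>lists_len P k. paired ws}. w x ^ 2 * (\<Prod>y\<leftarrow>ws. w y))"
    unfolding B_def sum.cartesian_product'
    by (intro sum.cong refl) (simp add: g_def prod_list_map_insert_at power2_eq_square)
  also have "\<dots> = (\<Sum>x\<in>P. w x ^ 2 * (real (Suc k) * paired_sum P w k))"
    by (simp add: paired_sum_def sum_distrib_left mult_ac)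
  also have "\<dots> = (\<Sum>x\<in>P. w x ^ 2) * real (Suc k) * paired_sum P w k"
    by (simp add: sum_distrib_left[symmetric] sum_distrib_right mult_ac)
  finally show ?thesis by (simp add: mult_ac)
qed

lemma paired_sum_le:
  assumes fin: "finite P" and w: "\<And>x. 0 \<le> w x"
  shows "paired_sum P w (2 * m) \<le> (real (2 * m) * (\<Sum>x\<in>P. w x ^ 2)) ^ m"
proof (induction m)
  case 0 then show ?case by (simp add: paired_sum_0)
next
  case (Suc m)
  define S where "S = (\<Sum>x\<in>P. w x ^ 2)"
  have S: "0 \<le> S" unfolding S_def by (simp add: sum_nonneg)
  have "paired_sum P w (2 * Suc m) \<le> real (Suc (2*m)) * S * paired_sum P w (2 * m)"
    unfolding S_def using paired_sum_Suc_Suc_le[OF fin w, where k = "2 * m"] by simp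
  also have "\<dots> \<le> real (Suc (2*m)) * S * (real (2 * m) * S) ^ m"
    using Suc S by (intro mult_left_mono) (auto simp: S_def)
  also have "\<dots> \<le> (real (2 * Suc m) * S) * (real (2 * Suc m) * S) ^ m"
    using S by (intro mult_mono power_mono mult_right_mono) auto
  finally show ?case unfolding S_def by simp
qed

lemma abs_prod_list_map: "\<bar>\<Prod>x\<leftarrow>xs. c x\<bar> = (\<Prod>x\<leftarrow>xs. \<bar>c x\<bar> :: real)"
  by (induction xs) (auto simp: abs_mult)

lemma prod_list_multf: "(\<Prod>x\<leftarrow>xs. f x * g x) = (\<Prod>x\<leftarrow>xs. f x) * (\<Prod>x\<leftarrow>xs. g x :: 'a::comm_monoid_mult)"
  by (induction xs) (simp_all add: ac_simps)

lemma prod_list_le_power_length: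
  assumes "\<And>q. q \<in> set xs \<Longrightarrow> q \<le> Y"
  shows "prod_list xs \<le> (Y::nat) ^ length xs"
  using assms by (induction xs) (auto intro: mult_le_mono)

lemma abs_sum_legendre8_prod_not_paired_le:
  fixes Y :: nat
  assumes P: "\<And>q. q \<in> P \<Longrightarrow> prime q \<and> 2 < q \<and> q \<le> Y"
    and qs: "qs \<in> lists_len P k" "\<not> paired qs"
  shows "\<bar>\<Sum>n<Z. legendre8_prod qs n\<bar> \<le> real Y ^ k"
proof -
  obtain q\<^sub>0 where "odd (count_list qs q\<^sub>0)" using qs(2) unfolding paired_def by blast
  then have "\<bar>\<Sum>n<Z. legendre8_prod qs n\<bar> \<le> real (prod_list qs)"
    using qs(1) P unfolding lists_len_def by (intro abs_sum_legendre8_prod_le) blast+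
  also have "prod_list qs \<le> Y ^ k"
    using prod_list_le_power_length[of qs Y] qs(1) P unfolding lists_len_def by blast
  then have "real (prod_list qs) \<le> real Y ^ k" by (metis of_nat_le_iff of_nat_power)
  finally show ?thesis .
qed

text \<open>A product over a paired list is identically \<open>1\<close> or \<open>0\<close>, so
  those terms contribute at most \<open>Z\<close> times the paired sum; every other product has a prime of
  odd multiplicity, and its sum over \<open>n < Z\<close> is bounded independently of \<open>Z\<close>.\<close>
lemma sum_power_legendre8_sum_le:
  fixes c :: "nat \<Rightarrow> real" and Y :: nat
  assumes fin: "finite P" and P: "\<And>q. q \<in> P \<Longrightarrow> prime q \<and> 2 < q \<and> q \<le> Y"
  shows "(\<Sum>n<Z. (\<Sum>q\<in>P. c q * legendre8 q n) ^ (2*m))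
     \<le> real Z * (real (2*m) * (\<Sum>q\<in>P. (c q)^2)) ^ m + real Y ^ (2*m) * (\<Sum>q\<in>P. \<bar>c q\<bar>) ^ (2*m)"
proof -
  define L where "L = lists_len P (2*m)"
  define a where "a = (\<lambda>qs. \<bar>\<Prod>q\<leftarrow>qs. c q\<bar>)"
  define s where "s = (\<lambda>qs. \<bar>\<Sum>n<Z. legendre8_prod qs n\<bar>)"
  have finL: "finite L" unfolding L_def using finite_lists_len[OF fin] .
  have a0: "0 \<le> a qs" for qs unfolding a_def by simp
  have "(\<Sum>n<Z. (\<Sum>q\<in>P. c q * legendre8 q n) ^ (2*m))
      = (\<Sum>n<Z. \<Sum>qs\<in>L. (\<Prod>q\<leftarrow>qs. c q) * legendre8_prod qs n)"
    unfolding L_def sum_power_eq_sum_lists_len[OF fin] legendre8_prod_def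
    by (simp add: prod_list_multf)
  also have "\<dots> = (\<Sum>qs\<in>L. (\<Prod>q\<leftarrow>qs. c q) * (\<Sum>n<Z. legendre8_prod qs n))"
    by (subst sum.swap) (simp add: sum_distrib_left)
  also have "\<dots> \<le> (\<Sum>qs\<in>L. a qs * s qs)"
    unfolding a_def s_def by (intro sum_mono) (metis abs_ge_self abs_mult)
  also have "\<dots> = (\<Sum>qs\<in>{qs\<in>L. paired qs}. a qs * s qs) + (\<Sum>qs\<in>{qs\<in>L. \<not> paired qs}. a qs * s qs)"
    using finL by (subst sum.union_disjoint[symmetric]) (auto intro: sum.cong)
  also have "(\<Sum>qs\<in>{qs\<in>L. paired qs}. a qs * s qs) \<le> (\<Sum>qs\<in>{qs\<in>L. paired qs}. a qs * real Z)"
  proof (intro sum_mono mult_left_mono a0)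
    fix qs
    have "s qs \<le> (\<Sum>n<Z. \<bar>legendre8_prod qs n\<bar>)" unfolding s_def by (rule sum_abs)
    also have "\<dots> \<le> (\<Sum>n<Z. 1)" by (intro sum_mono abs_legendre8_prod_le)
    finally show "s qs \<le> real Z" by simp
  qed
  also have "(\<Sum>qs\<in>{qs\<in>L. paired qs}. a qs * real Z) = real Z * paired_sum P (\<lambda>q. \<bar>c q\<bar>) (2*m)"
    unfolding paired_sum_def L_def a_def by (simp add: abs_prod_list_map sum_distrib_left mult.commute)
  also have "paired_sum P (\<lambda>q. \<bar>c q\<bar>) (2*m) \<le> (real (2*m) * (\<Sum>q\<in>P. (c q)^2)) ^ m"
    using paired_sum_le[OF fin, of "\<lambda>q. \<bar>c q\<bar>" m] by simp
  also have "(\<Sum>qs\<in>{qs\<in>L. \<not> paired qs}. a qs * s qs) \<le> (\<Sum>qs\<in>L. a qs * real Y ^ (2*m))"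
  proof (rule order_trans[OF sum_mono sum_mono2[OF finL]])
    fix qs assume "qs \<in> {qs\<in>L. \<not> paired qs}"
    then have "s qs \<le> real Y ^ (2*m)"
      unfolding s_def L_def using abs_sum_legendre8_prod_not_paired_le[OF P] by blast
    then show "a qs * s qs \<le> a qs * real Y ^ (2*m)" by (rule mult_left_mono) (rule a0)
  qed (auto simp: a0)
  also have "(\<Sum>qs\<in>L. a qs * real Y ^ (2*m)) = real Y ^ (2*m) * (\<Sum>q\<in>P. \<bar>c q\<bar>) ^ (2*m)"
    unfolding L_def a_def sum_power_eq_sum_lists_len[OF fin]
    by (simp add: abs_prod_list_map sum_distrib_left mult.commute)
  finally show ?thesis by (simp add: mult_left_mono)
qed

lemma card_greater_abs_le_sum_power:
  fixes f :: "nat \<Rightarrow> real"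
  assumes "0 < h"
  shows "real (card {n\<in>{..<Z}. h < \<bar>f n\<bar>}) * h ^ (2*m) \<le> (\<Sum>n<Z. f n ^ (2*m))"
proof -
  define A where "A = {n\<in>{..<Z}. h < \<bar>f n\<bar>}"
  have "real (card A) * h ^ (2*m) = (\<Sum>n\<in>A. h ^ (2*m))" by simp
  also have "\<dots> \<le> (\<Sum>n\<in>A. f n ^ (2*m))"
  proof (rule sum_mono)
    fix n assume "n \<in> A"
    then have "h ^ (2*m) \<le> \<bar>f n\<bar> ^ (2*m)"
      using assms unfolding A_def by (intro power_mono) auto
    then show "h ^ (2*m) \<le> f n ^ (2*m)" by (simp add: power_mult power2_abs)
  qed
  also have "\<dots> \<le> (\<Sum>n<Z. f n ^ (2*m))"
    by (rule sum_mono2) (auto simp: A_def power_mult)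
  finally show ?thesis unfolding A_def .
qed

lemma card_large_legendre8_sum_le:
  fixes c :: "nat \<Rightarrow> real" and Y :: nat
  assumes fin: "finite P" and P: "\<And>q. q \<in> P \<Longrightarrow> prime q \<and> 2 < q \<and> q \<le> Y" and h: "1 \<le> h"
  shows "real (card {n\<in>{..<Z}. h < \<bar>\<Sum>q\<in>P. c q * legendre8 q n\<bar>})
     \<le> real Z * (real (2*m) * (\<Sum>q\<in>P. (c q)^2) / h^2) ^ m + (real Y * (\<Sum>q\<in>P. \<bar>c q\<bar>)) ^ (2*m)"
proof -
  define S T where "S = (\<Sum>q\<in>P. (c q)^2)" and "T = (\<Sum>q\<in>P. \<bar>c q\<bar>)"
  define C where "C = real (card {n\<in>{..<Z}. h < \<bar>\<Sum>q\<in>P. c q * legendre8 q n\<bar>})"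
  have "C * h ^ (2*m) \<le> real Z * (real (2*m) * S) ^ m + real Y ^ (2*m) * T ^ (2*m)"
    using card_greater_abs_le_sum_power[of h] sum_power_legendre8_sum_le[OF fin P] h
    unfolding C_def S_def T_def by (meson less_le_trans order_trans zero_less_one)
  then have "C \<le> (real Z * (real (2*m) * S) ^ m + real Y ^ (2*m) * T ^ (2*m)) / h ^ (2*m)"
    using h by (simp add: le_divide_eq)
  also have "\<dots> = real Z * (real (2*m) * S / h^2) ^ m + (real Y * T) ^ (2*m) / h ^ (2*m)"
    by (simp add: add_divide_distrib power_divide power_mult power_mult_distrib)
  also have "(real Y * T) ^ (2*m) / h ^ (2*m) \<le> (real Y * T) ^ (2*m)"
    using h by (simp add: T_def divide_le_eq mult_le_cancel_left1 one_le_power sum_nonneg)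
  finally show ?thesis unfolding C_def S_def T_def by simp
qed

section \<open>A weak form of Mertens' theorem\<close>

lemma prod_primes_dvd:
  fixes S :: "nat set"
  assumes "finite S" "\<And>p. p \<in> S \<Longrightarrow> prime p \<and> p dvd n"
  shows "\<Prod>S dvd n"
  using assms
proof (induction S rule: finite_induct)
  case (insert p S)
  have "coprime p (\<Prod>S)"
  proof (rule prod_coprime_right)
    fix q assume "q \<in> S"
    then show "coprime p q" using insert primes_coprime by (metis insertCI)
  qed
  then show ?case using insert by (simp add: divides_mult)
qed simp

lemma binomial_odd_central_le: "(2*k+1) choose k \<le> 4 ^ k"
proof -
  have "((2*k+1) choose k) + ((2*k+1) choose (k+1)) = (\<Sum>i\<in>{k, k+1}. (2*k+1) choose i)" by simp
  also have "\<dots> \<le> (\<Sum>i\<le>2*k+1. (2*k+1) choose i)"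
    by (rule sum_mono2) auto
  also have "\<dots> = 2 * 4 ^ k" by (simp only: choose_row_sum) (simp add: power_mult)
  finally show ?thesis using binomial_symmetric[of k "2*k+1"] by simp
qed

lemma prime_dvd_binomial_odd_central:
  assumes "prime p" "k + 1 < p" "p \<le> 2*k+1"
  shows "p dvd ((2*k+1) choose k)"
proof -
  have "fact k * fact (k+1) * ((2*k+1) choose k) = (fact (2*k+1) :: nat)"
    using binomial_fact_lemma[of k "2*k+1"] by (simp add: Suc_diff_le)
  moreover have "p dvd fact (2*k+1)" "\<not> p dvd fact k" "\<not> p dvd fact (k+1)"
    unfolding prime_dvd_fact_iff[OF assms(1)] using assms(2,3) by auto
  ultimately show ?thesis using assms(1) by (metis prime_dvd_mult_iff)
qed

text \<open>The primes in \<open>(k + 1, 2k + 1]\<close> all divide \<open>(2k+1 choose k) \<le> 4\<^sup>k\<close>.\<close>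
lemma prod_primes_odd_le: "\<Prod>{p. prime p \<and> p \<le> 2*k+1} \<le> 4 ^ k * \<Prod>{p. prime p \<and> p \<le> k+1}"
proof -
  define B where "B = {p. prime p \<and> k+1 < p \<and> p \<le> 2*k+1}"
  have "{p. prime p \<and> p \<le> 2*k+1} = B \<union> {p. prime p \<and> p \<le> k+1}"
    unfolding B_def by auto
  then have "\<Prod>{p. prime p \<and> p \<le> 2*k+1} = \<Prod>B * \<Prod>{p. prime p \<and> p \<le> k+1}"
    by (simp only:) (rule prod.union_disjoint, auto simp: B_def)
  moreover have "\<Prod>B dvd ((2*k+1) choose k)"
  proof (rule prod_primes_dvd)
    fix p assume "p \<in> B"
    then show "prime p \<and> p dvd ((2*k+1) choose k)"
      unfolding B_def using prime_dvd_binomial_odd_central[of p k] by blast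
  qed (simp add: B_def)
  then have "\<Prod>B \<le> (2*k+1) choose k"
    by (rule dvd_imp_le) (simp add: zero_less_binomial)
  then have "\<Prod>B \<le> 4 ^ k" using binomial_odd_central_le[of k] by linarith
  ultimately show ?thesis by (simp add: mult_le_mono1)
qed

lemma prod_primes_le_four_power: "\<Prod>{p. prime p \<and> p \<le> n} \<le> 4 ^ n"
proof (induction n rule: less_induct)
  case (less n)
  consider "n \<le> 2" | "2 < n" "even n" | k where "2 < n" "n = 2*k+1"
    by (metis not_le oddE)
  then show ?case
  proof cases
    case 1
    then have "{p. prime p \<and> p \<le> n} \<subseteq> {2}" by (auto dest: prime_ge_2_nat)
    then have "{p. prime p \<and> p \<le> n} = {} \<or> {p. prime p \<and> p \<le> n} = {2}"
      by (rule subset_singletonD)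
    then show ?thesis
    proof
      assume primes: "{p. prime p \<and> p \<le> n} = {2}"
      then have "2 \<in> {p. prime p \<and> p \<le> n}" by simp
      then have "n = 2" using 1 by simp
      then show ?thesis using primes by simp
    next
      assume "{p. prime p \<and> p \<le> n} = {}"
      then show ?thesis by (simp only: prod.empty one_le_power)
    qed
  next
    case 2
    then have "\<not> prime n" using prime_odd_nat[of n] by auto
    then have "{p. prime p \<and> p \<le> n} = {p. prime p \<and> p \<le> n - 1}"
      using 2 by (auto simp: le_eq_less_or_eq)
    then have "\<Prod>{p. prime p \<and> p \<le> n} \<le> 4 ^ (n - 1)"
      using less[of "n - 1"] 2 by simp
    also have "\<dots> \<le> 4 ^ n" by (rule power_increasing) auto
    finally show ?thesis .
  next
    case 3
    have "\<Prod>{p. prime p \<and> p \<le> n} \<le> 4 ^ k * \<Prod>{p. prime p \<and> p \<le> k+1}"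
      unfolding 3 by (rule prod_primes_odd_le)
    also have "\<dots> \<le> 4 ^ k * 4 ^ (k+1)" using less[of "k+1"] 3 by simp
    also have "\<dots> = 4 ^ n" unfolding 3 by (simp add: power_add[symmetric])
    finally show ?thesis .
  qed
qed

definition dyadic_primes :: "nat \<Rightarrow> nat set" where
  "dyadic_primes i = {p. prime p \<and> 2^i < p \<and> p \<le> 2^(i+1)}"

lemma finite_dyadic_primes [simp]: "finite (dyadic_primes i)"
  unfolding dyadic_primes_def by simp

lemma card_dyadic_primes_le: "i * card (dyadic_primes i) \<le> 2 ^ (i+2)"
proof -
  have "(2::nat) ^ (i * card (dyadic_primes i)) = (\<Prod>p\<in>dyadic_primes i. 2 ^ i)"
    by (simp add: power_mult)
  also have "\<dots> \<le> \<Prod>(dyadic_primes i)"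
    by (rule prod_mono) (auto simp: dyadic_primes_def)
  also have "\<dots> \<le> \<Prod>{p. prime p \<and> p \<le> 2^(i+1)}"
    by (intro dvd_imp_le prod_dvd_prod_subset prod_pos) (auto simp: dyadic_primes_def prime_gt_0_nat)
  also have "\<dots> \<le> 4 ^ (2^(i+1))" by (rule prod_primes_le_four_power)
  also have "(4::nat) ^ (2^(i+1)) = 2 ^ (2 * 2^(i+1))"
    by (simp add: power_mult)
  also have "\<dots> = 2 ^ (2^(i+2))" by simp
  finally show ?thesis by (rule power_le_imp_le_exp[rotated]) simp
qed

lemma sum_inverse_dyadic_primes_le: "1 \<le> i \<Longrightarrow> (\<Sum>p\<in>dyadic_primes i. 1 / real p) \<le> 4 / real i"
proof -
  assume i: "1 \<le> i"
  have "(\<Sum>p\<in>dyadic_primes i. 1 / real p) \<le> (\<Sum>p\<in>dyadic_primes i. 1 / 2 ^ i)"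
  proof (rule sum_mono)
    fix p assume "p \<in> dyadic_primes i"
    then have "2^i \<le> p" unfolding dyadic_primes_def by simp
    then have "0 < p" by (rule less_le_trans[rotated]) simp
    have "(2::real)^i \<le> real p"
      using \<open>2^i \<le> p\<close> by (metis of_nat_le_iff of_nat_numeral of_nat_power)
    then show "1 / real p \<le> 1 / 2 ^ i"
      using \<open>0 < p\<close> by (intro divide_left_mono mult_pos_pos) auto
  qed
  also have "\<dots> = real (card (dyadic_primes i)) / 2 ^ i" by simp
  also have "\<dots> \<le> (2 ^ (i+2) / real i) / 2 ^ i"
  proof (intro divide_right_mono)
    have "real i * real (card (dyadic_primes i)) \<le> 2 ^ (i+2)"
      using card_dyadic_primes_le[of i] by (metis of_nat_le_iff of_nat_mult of_nat_numeral of_nat_power)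
    then show "real (card (dyadic_primes i)) \<le> 2 ^ (i+2) / real i" using i by (simp add: field_simps)
  qed simp
  also have "\<dots> = 4 / real i" by (simp add: power_add)
  finally show ?thesis .
qed

lemma sum_inverse_primes_le_two_power:
  "(\<Sum>p\<in>{p. prime p \<and> p \<le> 2 ^ Suc r}. 1 / real p) \<le> 4 * harm r + 1/2"
proof (induction r)
  case 0
  have "{p::nat. prime p \<and> p \<le> 2} = {2}" by (auto dest: prime_ge_2_nat)
  then show ?case by (simp add: harm_nonneg)
next
  case (Suc r)
  have "{p. prime p \<and> p \<le> 2 ^ Suc (Suc r)} = {p. prime p \<and> p \<le> 2 ^ Suc r} \<union> dyadic_primes (Suc r)"
    unfolding dyadic_primes_def by auto
  then have "(\<Sum>p\<in>{p. prime p \<and> p \<le> 2 ^ Suc (Suc r)}. 1 / real p)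
      = (\<Sum>p\<in>{p. prime p \<and> p \<le> 2 ^ Suc r}. 1 / real p) + (\<Sum>p\<in>dyadic_primes (Suc r). 1 / real p)"
    by (simp only:) (rule sum.union_disjoint, auto simp: dyadic_primes_def)
  also have "\<dots> \<le> 4 * harm r + 1/2 + 4 / real (Suc r)"
    using Suc sum_inverse_dyadic_primes_le[of "Suc r"] by simp
  also have "\<dots> = 4 * harm (Suc r) + 1/2" by (simp add: harm_Suc field_simps)
  finally show ?case .
qed

lemma sum_inverse_primes_le:
  fixes x :: real
  assumes x: "2 \<le> x"
  shows "(\<Sum>p\<in>{p. prime p \<and> real p \<le> x}. 1 / real p) \<le> 4 * ln (ln x / ln 2 + 1) + 5"
proof -
  define r where "r = nat \<lceil>ln x / ln 2\<rceil>"
  have lx: "1 \<le> ln x / ln 2" using x by (simp add: ln_mono field_simps)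
  then have r1: "1 \<le> r" and rle: "real r \<le> ln x / ln 2 + 1" and rge: "ln x / ln 2 \<le> real r"
    unfolding r_def by linarith+
  have "x = 2 powr (ln x / ln 2)" using x by (simp add: powr_def)
  also have "\<dots> \<le> 2 powr (real r)" using rge by (intro powr_mono) auto
  also have "\<dots> = 2 ^ r" by (simp add: powr_realpow)
  finally have x2: "x \<le> 2 ^ r" .
  have "{p. prime p \<and> real p \<le> x} \<subseteq> {p. prime p \<and> p \<le> 2 ^ Suc (r - 1)}"
  proof safe
    fix p assume "real p \<le> x"
    then have "real p \<le> 2 ^ r" using x2 by linarith
    then have "p \<le> 2 ^ r" by simp
    then show "p \<le> 2 ^ Suc (r - 1)" using r1 by simp
  qed
  then have "(\<Sum>p\<in>{p. prime p \<and> real p \<le> x}. 1 / real p) \<le> 4 * harm (r - 1) + 1/2"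
    by (intro order_trans[OF sum_mono2 sum_inverse_primes_le_two_power]) auto
  also have "harm (r - 1) \<le> (harm r :: real)" by (intro harm_mono) simp
  also have "harm r \<le> ln (real r) + (1::real)"
    using euler_mascheroni_sequence_decreasing[of 1 r] r1 by (simp add: harm_def)
  also have "ln (real r) \<le> ln (ln x / ln 2 + 1)" using rle r1 by (intro ln_mono) auto
  finally show ?thesis by simp
qed

section \<open>The sums \<open>aG\<close> as character sums\<close>

lemma finite_nat_real_le: "finite {q::nat. P q \<and> real q \<le> Y}"
  by (rule finite_subset[of _ "{..nat \<lfloor>Y\<rfloor>}"]) (auto intro: le_nat_floor)

lemma abs_hfun_le:
  assumes a: "\<forall>m\<in>{1..k}. 0 \<le> a m"
  shows "\<bar>hfun k a t n\<bar> \<le> (\<Sum>m=1..k. a m) / 2"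
proof -
  define e where "e m = (of_nat n :: complex) powr (- (\<i> * complex_of_real (t m)))" for m
  define z where "z = (\<Sum>m=1..k. complex_of_real (a m) * e m)"
  have "cmod z \<le> (\<Sum>m=1..k. cmod (complex_of_real (a m) * e m))"
    unfolding z_def by (rule norm_sum)
  also have "\<dots> \<le> (\<Sum>m=1..k. a m)"
  proof (rule sum_mono)
    fix m assume m: "m \<in> {1..k}"
    have "cmod (e m) \<le> 1"
      unfolding e_def by (subst norm_powr_real_powr) (auto simp: powr_def)
    then show "cmod (complex_of_real (a m) * e m) \<le> a m"
      using a m by (simp add: norm_mult mult_left_le)
  qed
  finally show ?thesis
    using abs_Re_le_cmod[of z] unfolding hfun_def z_def e_def by simp
qed

definition aG_coeff :: "nat \<Rightarrow> (nat \<Rightarrow> real) \<Rightarrow> (nat \<Rightarrow> real) \<Rightarrow> real \<Rightarrow> real \<Rightarrow> nat \<Rightarrow> nat \<Rightarrow> real" where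
  "aG_coeff k a t \<sigma> X l q = 2 * hfun k a t q / real q powr (1/2 + max (\<sigma> - 1/2) (1 / ln (X powr beta X l)))
      * (ln (X powr beta X l / real q) / ln (X powr beta X l))"

text \<open>Neither \<open>\<sigma>\<close> nor \<open>t\<close> matters here: the exponent of \<open>q\<close> is at least \<open>1/2\<close> and the logarithmic
  weight lies in \<open>[0, 1]\<close>.\<close>
lemma abs_aG_coeff_le:
  assumes a: "\<forall>m\<in>{1..k}. 0 \<le> a m" and X: "1 < X" and b1: "0 < beta X 1" and l: "1 \<le> l"
    and q: "2 \<le> q" "real q \<le> X powr beta X 1"
  shows "\<bar>aG_coeff k a t \<sigma> X l q\<bar> \<le> (\<Sum>m=1..k. a m) / sqrt (real q)"
proof -
  define E where "E = X powr beta X l"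
  have bl: "beta X 1 \<le> beta X l"
    using l unfolding beta_def by (auto intro!: divide_right_mono)
  have lE: "0 < ln E" unfolding E_def using X b1 bl by simp
  have qE: "real q \<le> E" unfolding E_def using q(2) X bl by (meson order_trans powr_mono less_imp_le)
  define w where "w = ln (E / real q) / ln E"
  have w: "0 \<le> w" "w \<le> 1"
    unfolding w_def using qE q(1) lE by (simp_all add: ln_div divide_le_eq_1_pos ln_ge_zero_iff field_simps)
  define d where "d = max (\<sigma> - 1/2) (1 / ln E)"
  have "0 \<le> d" unfolding d_def using lE by (simp add: le_max_iff_disj)
  then have sq: "sqrt (real q) \<le> real q powr (1/2 + d)"
    using q(1) by (simp add: powr_half_sqrt[symmetric] powr_mono)
  have "\<bar>aG_coeff k a t \<sigma> X l q\<bar> = 2 * \<bar>hfun k a t q\<bar> / real q powr (1/2 + d) * w"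
    unfolding aG_coeff_def E_def[symmetric] d_def[symmetric] w_def[symmetric] using w by (simp add: abs_mult)
  also have "\<dots> \<le> 2 * \<bar>hfun k a t q\<bar> / real q powr (1/2 + d)"
    using w by (intro mult_left_le) auto
  also have "\<dots> \<le> 2 * \<bar>hfun k a t q\<bar> / sqrt (real q)"
    using sq q(1) by (intro divide_left_mono) auto
  also have "\<dots> \<le> (\<Sum>m=1..k. a m) / sqrt (real q)"
    using abs_hfun_le[OF a, of t q] by (intro divide_right_mono) auto
  finally show ?thesis .
qed

text \<open>Only odd primes contribute, since \<open>\<chi>\<^bsup>(8p)\<^esup>(2) = 0\<close>.\<close>
lemma aG_1_eq_legendre8_sum:
  assumes "0 < X"
  shows "aG k a t \<sigma> X 1 l p
           = (\<Sum>q\<in>{q. prime q \<and> 2 < q \<and> real q \<le> X powr beta X 1}. aG_coeff k a t \<sigma> X l q * legendre8 q p)"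
proof -
  define f where "f q = (if q = 2 then 0 else aG_coeff k a t \<sigma> X l q * legendre8 q p)" for q
  have "aG k a t \<sigma> X 1 l p = (\<Sum>q\<in>{q. prime q \<and> real q \<le> X powr beta X 1}. f q)"
    unfolding aG_def f_def using assms
    by (intro sum.cong) (auto simp: beta_def kronecker_prime_def legendre8_def aG_coeff_def prime_gt_1_nat
        dest: prime_gt_1_nat)
  also have "\<dots> = (\<Sum>q\<in>{q. prime q \<and> 2 < q \<and> real q \<le> X powr beta X 1}. f q)"
    using prime_ge_2_nat
    by (intro sum.mono_neutral_right finite_nat_real_le) (auto simp: f_def le_less)
  finally show ?thesis by (simp add: f_def)
qed

lemma Jcal_le:
  assumes L: "0 < ln (ln X)" and small: "1 / (ln (ln X))^2 \<le> 10 powr (-M)"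
  shows "real (Jcal X M) \<le> 2 + 10 powr (-M) * (ln (ln X))^2"
proof -
  define B where "B = 1 + 10 powr (-M) * (ln (ln X))^2"
  define S where "S = {j. 1 \<le> j \<and> beta X j \<le> 10 powr (-M)}"
  have bound: "real j \<le> B" if "j \<in> S" for j
  proof -
    have j: "1 \<le> j" "20 ^ (j - 1) / (ln (ln X))^2 \<le> 10 powr (-M)"
      using that unfolding S_def beta_def by auto
    then have "20 ^ (j - 1) \<le> 10 powr (-M) * (ln (ln X))^2"
      using L by (simp add: divide_le_eq)
    moreover have "j - 1 < 20 ^ (j - 1)"
      by (rule order.strict_trans2[OF less_exp power_mono]) simp_all
    then have "real (j - 1) < 20 ^ (j - 1)" by (metis of_nat_less_iff of_nat_numeral of_nat_power)
    ultimately have "real (j - 1) \<le> 10 powr (-M) * (ln (ln X))^2" by linarith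
    then show ?thesis using j(1) unfolding B_def by (simp add: of_nat_diff)
  qed
  have "S \<subseteq> {..nat \<lfloor>B\<rfloor>}" using bound by (auto intro: le_nat_floor)
  then have "finite S" by (rule finite_subset) simp
  moreover have "1 \<in> S" unfolding S_def beta_def using small by simp
  ultimately have "Max S \<in> S" by (intro Max_in) auto
  then show ?thesis using bound unfolding Jcal_def S_def B_def by fastforce
qed

lemma h_idx_1_lower:
  assumes L: "100 \<le> ln (ln X)" and N: "0 \<le> N"
  shows "1 \<le> h_idx X N 1" and "exp (2*N) * (ln (ln X))^3 / 10^4 \<le> (h_idx X N 1)^2"
proof -
  define L where "L = ln (ln X)"
  have Lp: "0 < L" using assms unfolding L_def by simp
  define y where "y = exp N * L powr (3/2)"
  have "ln (1 / L^2) = - 2 * ln L" using Lp by (simp add: ln_div ln_realpow)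
  then have "(1 / L^2) powr (-3/4) = L powr (3/2)" using Lp by (simp add: powr_def)
  then have h: "h_idx X N 1 = 2 * real_of_int \<lfloor>y\<rfloor> / 100"
    unfolding h_idx_def s_idx_def y_def beta_def L_def by simp
  have "L = L powr 1" using Lp by simp
  also have "\<dots> \<le> L powr (3/2)" using L unfolding L_def by (intro powr_mono) auto
  also have "\<dots> \<le> y" unfolding y_def using N Lp by (simp add: mult_le_cancel_right1)
  finally have y100: "100 \<le> y" using L unfolding L_def by linarith
  then have hy: "y / 100 \<le> h_idx X N 1" unfolding h by linarith
  then show "1 \<le> h_idx X N 1" using y100 by simp
  have "(L powr (3/2))^2 = L powr 3" by (simp add: power2_eq_square powr_add[symmetric])
  also have "\<dots> = L ^ 3" using Lp by (simp add: powr_numeral)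
  finally have "(y / 100)^2 = exp (2*N) * L^3 / 10^4"
    unfolding y_def by (simp add: power_mult_distrib power_divide exp_double[symmetric] mult.commute)
  moreover have "(y / 100)^2 \<le> (h_idx X N 1)^2" using hy y100 by (intro power_mono) auto
  ultimately show "exp (2*N) * (ln (ln X))^3 / 10^4 \<le> (h_idx X N 1)^2" unfolding L_def by simp
qed

section \<open>Counting the exceptional primes\<close>

lemma sum_aG_coeff_bounds:
  assumes a: "\<forall>m\<in>{1..k}. 0 \<le> a m" and X: "1 < X" and b1: "0 < beta X 1" and l: "1 \<le> l"
    and P: "\<And>q. q \<in> P \<Longrightarrow> 2 \<le> q \<and> real q \<le> X powr beta X 1"
  shows "(\<Sum>q\<in>P. (aG_coeff k a t \<sigma> X l q)^2) \<le> (\<Sum>m=1..k. a m)^2 * (\<Sum>q\<in>P. 1 / real q)"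
    and "(\<Sum>q\<in>P. \<bar>aG_coeff k a t \<sigma> X l q\<bar>) \<le> (\<Sum>m=1..k. a m) * real (card P)"
proof -
  define A where "A = (\<Sum>m=1..k. a m)"
  have c: "\<bar>aG_coeff k a t \<sigma> X l q\<bar> \<le> A / sqrt (real q)" if "q \<in> P" for q
    unfolding A_def using P[OF that] by (intro abs_aG_coeff_le a X b1 l) auto
  have "0 \<le> A" unfolding A_def using a by (intro sum_nonneg) auto
  have "(aG_coeff k a t \<sigma> X l q)^2 \<le> A^2 * (1 / real q)" if "q \<in> P" for q
  proof -
    have "(aG_coeff k a t \<sigma> X l q)^2 \<le> (A / sqrt (real q))^2"
      using power_mono[OF c[OF that] abs_ge_zero, of 2] by simp
    then show ?thesis using P[OF that] by (simp add: power_divide)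
  qed
  then show "(\<Sum>q\<in>P. (aG_coeff k a t \<sigma> X l q)^2) \<le> (\<Sum>m=1..k. a m)^2 * (\<Sum>q\<in>P. 1 / real q)"
    unfolding A_def[symmetric] by (simp add: sum_distrib_left sum_mono)
  have "\<bar>aG_coeff k a t \<sigma> X l q\<bar> \<le> A" if "q \<in> P" for q
  proof -
    have "1 \<le> sqrt (real q)" using P[OF that] by simp
    then have "A / sqrt (real q) \<le> A" using \<open>0 \<le> A\<close> by (simp add: divide_le_eq mult_le_cancel_left1)
    then show ?thesis using c[OF that] by simp
  qed
  then show "(\<Sum>q\<in>P. \<bar>aG_coeff k a t \<sigma> X l q\<bar>) \<le> (\<Sum>m=1..k. a m) * real (card P)"
    unfolding A_def[symmetric] using sum_mono[of P "\<lambda>q. \<bar>aG_coeff k a t \<sigma> X l q\<bar>" "\<lambda>_. A"] by (simp add: mult.commute)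
qed

lemma power_le_exp_neg_sq:
  assumes "0 \<le> r" "r \<le> exp (-24)" "L^2 / 8 - 1 \<le> real m"
  shows "r ^ m \<le> exp 24 * exp (-3 * L^2)"
proof -
  have "r ^ m \<le> exp (-24) ^ m" using assms by (intro power_mono)
  also have "\<dots> = exp (- 24 * real m)" by (simp add: exp_of_nat_mult[symmetric] mult.commute)
  also have "\<dots> \<le> exp (24 - 3 * L^2)" using assms(3) by simp
  finally show ?thesis by (simp add: exp_diff exp_minus field_simps)
qed

lemma off_diagonal_term_le:
  assumes X: "1 < X" and L: "0 < L" and m: "real m \<le> L^2 / 8" and A: "1 \<le> A"
    and Y: "real Y \<le> X powr (1 / L^2)" and T: "0 \<le> T" "T \<le> A * real Y"
  shows "(real Y * T) ^ (2*m) \<le> exp (L^2 * ln A / 4) * sqrt X"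
proof -
  have "real Y * T \<le> real Y * (A * real Y)" using T(2) by (intro mult_left_mono) auto
  also have "\<dots> = A * (real Y * real Y)" by simp
  also have "\<dots> \<le> A * (X powr (1 / L^2) * X powr (1 / L^2))"
    using A Y by (intro mult_left_mono mult_mono) auto
  also have "\<dots> = A * (X powr (1 / L^2))^2" by (simp add: power2_eq_square[of "X powr _"])
  finally have "real Y * T \<le> A * (X powr (1 / L^2))^2" .
  then have "(real Y * T) ^ (2*m) \<le> (A * (X powr (1 / L^2))^2) ^ (2*m)"
    using T by (intro power_mono) auto
  also have "\<dots> = A powr real (2*m) * X powr (4 * real m / L^2)"
    using A X by (simp add: power_mult_distrib powr_realpow[symmetric] powr_powr power_mult[symmetric])
  also have "\<dots> \<le> A powr (L^2 / 4) * X powr (1/2)"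
    using A X m L by (intro mult_mono powr_mono) (auto simp: divide_le_eq)
  also have "\<dots> = exp (L^2 * ln A / 4) * sqrt X"
    using A X by (simp add: powr_def powr_half_sqrt[symmetric] mult.commute)
  finally show ?thesis .
qed

lemma moment_ratio_le:
  fixes L A N S h :: real
  assumes L: "0 < L" and m: "real m \<le> L^2 / 8" and S: "0 \<le> S" "S \<le> A^2 * (10 * L)"
    and h: "1 \<le> h" "exp (2*N) * L^3 / 10^4 \<le> h^2"
    and N: "25000 * A^2 / exp (2*N) \<le> exp (-24)"
  shows "real (2*m) * S / h^2 \<le> exp (-24)"
proof -
  have "real (2*m) * S \<le> (L^2 / 4) * (A^2 * (10 * L))"
    using m S by (intro mult_mono) auto
  also have "\<dots> = 25000 * A^2 / exp (2*N) * (exp (2*N) * L^3 / 10^4)"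
    by (simp add: field_simps power2_eq_square power3_eq_cube)
  also have "\<dots> \<le> exp (-24) * h^2"
    using N h(2) L by (intro mult_mono) auto
  finally show ?thesis using h(1) by (simp add: divide_le_eq)
qed

lemma odd_primes_aG_coeff_sums_le:
  fixes k :: nat and a t :: "nat \<Rightarrow> real" and \<sigma> X :: real and l :: nat
  assumes a: "\<forall>m\<in>{1..k}. 0 \<le> a m" and X: "3 \<le> X" and L: "100 \<le> ln (ln X)"
    and mertens: "4 * ln (ln X / ln 2 + 1) + 5 \<le> 10 * ln (ln X)" and l: "1 \<le> l"
  shows "(\<Sum>q | prime q \<and> 2 < q \<and> real q \<le> X powr beta X 1. (aG_coeff k a t \<sigma> X l q)^2)
           \<le> (\<Sum>m=1..k. a m)^2 * (10 * ln (ln X))"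
    and "(\<Sum>q | prime q \<and> 2 < q \<and> real q \<le> X powr beta X 1. \<bar>aG_coeff k a t \<sigma> X l q\<bar>)
           \<le> max 1 (\<Sum>m=1..k. a m) * real (nat \<lfloor>X powr beta X 1\<rfloor>)"
proof -
  define P where "P = {q. prime q \<and> 2 < q \<and> real q \<le> X powr beta X 1}"
  have b1: "beta X 1 = 1 / (ln (ln X))^2" using L unfolding beta_def by simp
  have "1 \<le> (ln (ln X))^2" using L by (simp add: one_le_power)
  then have "X powr beta X 1 \<le> X powr 1"
    unfolding b1 using X by (intro powr_mono) (auto simp: divide_le_eq_1)
  then have P_X: "P \<subseteq> {p. prime p \<and> real p \<le> X}" unfolding P_def using X by auto
  have Pq: "\<And>q. q \<in> P \<Longrightarrow> 2 \<le> q \<and> real q \<le> X powr beta X 1" unfolding P_def by auto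
  have "0 < ln (ln X)" using L by simp
  then have X1: "1 < X" and b1p: "0 < beta X 1" using X b1 by simp_all
  note coeff = sum_aG_coeff_bounds[OF a X1 b1p l Pq]
  have "(\<Sum>q\<in>P. 1 / real q) \<le> (\<Sum>q\<in>{p. prime p \<and> real p \<le> X}. 1 / real q)"
    using P_X by (intro sum_mono2 finite_nat_real_le) auto
  also have "\<dots> \<le> 10 * ln (ln X)" using sum_inverse_primes_le[of X] X mertens by simp
  finally have "(\<Sum>m=1..k. a m)^2 * (\<Sum>q\<in>P. 1 / real q) \<le> (\<Sum>m=1..k. a m)^2 * (10 * ln (ln X))"
    by (rule mult_left_mono) simp
  with coeff(1) show "(\<Sum>q | prime q \<and> 2 < q \<and> real q \<le> X powr beta X 1. (aG_coeff k a t \<sigma> X l q)^2)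
      \<le> (\<Sum>m=1..k. a m)^2 * (10 * ln (ln X))"
    unfolding P_def by (rule order_trans)
  have "P \<subseteq> {1..nat \<lfloor>X powr beta X 1\<rfloor>}" unfolding P_def by (auto intro: le_nat_floor)
  then have "card P \<le> nat \<lfloor>X powr beta X 1\<rfloor>" using card_mono[of "{1.._}" P] by fastforce
  then have "real (card P) \<le> real (nat \<lfloor>X powr beta X 1\<rfloor>)" by (simp only: of_nat_le_iff)
  then have "(\<Sum>m=1..k. a m) * real (card P) \<le> max 1 (\<Sum>m=1..k. a m) * real (nat \<lfloor>X powr beta X 1\<rfloor>)"
    by (intro mult_mono) auto
  with coeff(2) show "(\<Sum>q | prime q \<and> 2 < q \<and> real q \<le> X powr beta X 1. \<bar>aG_coeff k a t \<sigma> X l q\<bar>)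
      \<le> max 1 (\<Sum>m=1..k. a m) * real (nat \<lfloor>X powr beta X 1\<rfloor>)"
    unfolding P_def by (rule order_trans)
qed

text \<open>The moment method with \<open>m \<approx> L\<^sup>2/8\<close> moments, where \<open>L = log log X\<close>: the threshold
  \<open>h\<^sub>1\<^sup>2 \<ge> e\<^bsup>2N\<^esup> L\<^sup>3 / 10\<^sup>4\<close> beats \<open>2m \<Sum> c\<^sub>q\<^sup>2 = O(A\<^sup>2 L\<^sup>3)\<close> once \<open>N\<close> is large.\<close>
lemma card_large_aG_le:
  fixes k :: nat and a t :: "nat \<Rightarrow> real" and \<sigma> X N :: real and l Z :: nat
  defines "L \<equiv> ln (ln X)" and "A \<equiv> \<Sum>m=1..k. a m"
  assumes a: "\<forall>m\<in>{1..k}. 0 \<le> a m" and X: "3 \<le> X" and L: "100 \<le> L"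
    and mertens: "4 * ln (ln X / ln 2 + 1) + 5 \<le> 10 * L"
    and N: "0 \<le> N" "25000 * A^2 / exp (2*N) \<le> exp (-24)" and l: "1 \<le> l"
  shows "real (card {n\<in>{..<Z}. h_idx X N 1 < \<bar>aG k a t \<sigma> X 1 l n\<bar>})
           \<le> real Z * (exp 24 * exp (-3 * L^2)) + exp (L^2 * ln (max 1 A) / 4) * sqrt X"
proof -
  have Lp: "0 < L" using L by simp
  define Y where "Y = nat \<lfloor>X powr beta X 1\<rfloor>"
  define P where "P = {q. prime q \<and> 2 < q \<and> real q \<le> X powr beta X 1}"
  define c where "c = aG_coeff k a t \<sigma> X l"
  define m where "m = nat \<lfloor>L^2 / 8\<rfloor>"
  define h where "h = h_idx X N 1"
  have finP: "finite P"
    unfolding P_def using finite_nat_real_le[of "\<lambda>q. prime q \<and> 2 < q"] by (simp add: conj_assoc)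
  have P: "prime q \<and> 2 < q \<and> q \<le> Y" if "q \<in> P" for q
    using that le_nat_floor unfolding P_def Y_def by auto
  have Y: "real Y \<le> X powr (1 / L^2)" unfolding Y_def L_def beta_def by simp
  have "real m = of_int \<lfloor>L^2 / 8\<rfloor>" unfolding m_def by simp
  then have m: "L^2/8 - 1 \<le> real m" "real m \<le> L^2/8" by linarith+
  have h: "1 \<le> h" "exp (2*N) * L^3 / 10^4 \<le> h^2"
    using h_idx_1_lower[OF L[unfolded L_def] N(1)] unfolding h_def L_def by auto
  note sums = odd_primes_aG_coeff_sums_le[OF a X L[unfolded L_def] mertens[unfolded L_def] l,
      where t = t and \<sigma> = \<sigma>, folded P_def c_def Y_def A_def L_def]
  have ratio: "real (2*m) * (\<Sum>q\<in>P. (c q)^2) / h^2 \<le> exp (-24)"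
    by (rule moment_ratio_le[OF Lp m(2) _ sums(1) h N(2)]) (simp add: sum_nonneg)
  have "0 < X" using X by simp
  then have "{n\<in>{..<Z}. h < \<bar>aG k a t \<sigma> X 1 l n\<bar>} = {n\<in>{..<Z}. h < \<bar>\<Sum>q\<in>P. c q * legendre8 q n\<bar>}"
    unfolding P_def c_def by (simp only: aG_1_eq_legendre8_sum)
  then have "real (card {n\<in>{..<Z}. h < \<bar>aG k a t \<sigma> X 1 l n\<bar>})
      \<le> real Z * (real (2*m) * (\<Sum>q\<in>P. (c q)^2) / h^2) ^ m + (real Y * (\<Sum>q\<in>P. \<bar>c q\<bar>)) ^ (2*m)"
    using card_large_legendre8_sum_le[OF finP P h(1)] by simp
  also have "\<dots> \<le> real Z * (exp 24 * exp (-3 * L^2)) + exp (L^2 * ln (max 1 A) / 4) * sqrt X"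
    using power_le_exp_neg_sq[OF _ ratio m(1)] off_diagonal_term_le[OF _ Lp m(2) _ Y _ sums(2)] X
    by (intro add_mono mult_left_mono) (auto simp: sum_nonneg)
  finally show ?thesis unfolding h_def .
qed

lemma card_S0_le:
  "card {p\<in>S0 k a t \<sigma> X M N. p < Z}
     \<le> (\<Sum>l=1..Jcal X M. card {n\<in>{..<Z}. h_idx X N 1 < \<bar>aG k a t \<sigma> X 1 l n\<bar>})"
proof -
  have "{p\<in>S0 k a t \<sigma> X M N. p < Z} \<subseteq> (\<Union>l\<in>{1..Jcal X M}. {n\<in>{..<Z}. h_idx X N 1 < \<bar>aG k a t \<sigma> X 1 l n\<bar>})"
    unfolding S0_def by auto
  then show ?thesis
    by (intro order_trans[OF card_mono card_UN_le]) auto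
qed

lemma sum_ln_Phi_le:
  fixes \<Phi> :: "real \<Rightarrow> real"
  assumes \<Phi>: "\<forall>x. 0 \<le> \<Phi> x" "\<forall>x. \<Phi> x \<le> 1" "\<forall>x. 3/2 < x \<longrightarrow> \<Phi> x = 0"
    and X: "1 \<le> X" and primes: "\<And>p. p \<in> S \<Longrightarrow> prime p"
  shows "(\<Sum>p\<in>{p. p \<in> S \<and> real p \<le> 2 * X}. ln (real p) * \<Phi> (real p / X))
           \<le> ln (2*X) * real (card {p\<in>S. p < nat \<lfloor>3*X/2\<rfloor> + 1})"
proof -
  define Z where "Z = nat \<lfloor>3*X/2\<rfloor> + 1"
  define T where "T = {p. p \<in> S \<and> real p \<le> 2 * X}"
  have finT: "finite T" unfolding T_def by (rule finite_nat_real_le)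
  have "ln (real p) * \<Phi> (real p / X) \<le> (if p < Z then ln (2*X) else 0)" if "p \<in> T" for p
  proof (cases "p < Z")
    case True
    have "2 \<le> p" "real p \<le> 2 * X" using that primes prime_ge_2_nat unfolding T_def by auto
    then have "ln (real p) * \<Phi> (real p / X) \<le> ln (2*X) * 1"
      using \<Phi> by (intro mult_mono) auto
    then show ?thesis using True by simp
  next
    case False
    then have "3/2 < real p / X" unfolding Z_def using X by (simp add: field_simps) linarith
    then show ?thesis using False \<Phi>(3) by simp
  qed
  then have "(\<Sum>p\<in>T. ln (real p) * \<Phi> (real p / X)) \<le> (\<Sum>p\<in>T. if p < Z then ln (2*X) else 0)"
    by (rule sum_mono)
  also have "\<dots> = ln (2*X) * real (card {p\<in>T. p < Z})"
    using finT by (simp add: sum.If_cases Int_def)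
  also have "\<dots> \<le> ln (2*X) * real (card {p\<in>S. p < Z})"
  proof -
    have "finite {p\<in>S. p < Z}" by (rule finite_subset[of _ "{..<Z}"]) auto
    then have "card {p\<in>T. p < Z} \<le> card {p\<in>S. p < Z}"
      by (rule card_mono) (auto simp: T_def)
    then show ?thesis using X by (intro mult_left_mono) auto
  qed
  finally show ?thesis unfolding T_def Z_def .
qed

lemma sum_S0_le:
  fixes \<Phi> :: "real \<Rightarrow> real" and k :: nat and a t :: "nat \<Rightarrow> real" and \<sigma> X M N :: real
  defines "L \<equiv> ln (ln X)" and "A \<equiv> \<Sum>m=1..k. a m"
  assumes a: "\<forall>m\<in>{1..k}. 0 \<le> a m" and X: "3 \<le> X" and L: "100 \<le> L"
    and small: "1 / L^2 \<le> 10 powr (-M)"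
    and mertens: "4 * ln (ln X / ln 2 + 1) + 5 \<le> 10 * L"
    and N: "0 \<le> N" "25000 * A^2 / exp (2*N) \<le> exp (-24)"
    and large: "ln (2*X) * ((2 + 10 powr (-M)) * L^2)
                  * (2*X * exp 24 * exp (-3 * L^2) + exp (L^2 * ln (max 1 A) / 4) * sqrt X)
                \<le> X * exp (- (L^2))"
    and \<Phi>: "\<forall>x. 0 \<le> \<Phi> x" "\<forall>x. \<Phi> x \<le> 1" "\<forall>x. 3/2 < x \<longrightarrow> \<Phi> x = 0"
  shows "(\<Sum>p\<in>{p. p \<in> S0 k a t \<sigma> X M N \<and> real p \<le> 2 * X}. ln (real p) * \<Phi> (real p / X))
           \<le> X * exp (- (L^2))"
proof -
  define Z where "Z = nat \<lfloor>3*X/2\<rfloor> + 1"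
  define B where "B = 2*X * exp 24 * exp (-3 * L^2) + exp (L^2 * ln (max 1 A) / 4) * sqrt X"
  have "0 \<le> ln (2*X)" "0 \<le> B" using X unfolding B_def by simp_all
  have card: "real (card {n\<in>{..<Z}. h_idx X N 1 < \<bar>aG k a t \<sigma> X 1 l n\<bar>}) \<le> B" if "1 \<le> l" for l
  proof -
    have "real Z \<le> 2 * X" unfolding Z_def using X by linarith
    then have "real Z * (exp 24 * exp (-3 * L^2)) \<le> 2*X * exp 24 * exp (-3 * L^2)"
      using mult_right_mono[of "real Z" "2 * X" "exp 24 * exp (-3 * L^2)"] by (simp add: mult.assoc)
    then show ?thesis
      using card_large_aG_le[OF a X L[unfolded L_def] mertens[unfolded L_def] N[unfolded A_def] that, of Z t \<sigma>]
      unfolding B_def L_def A_def by linarith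
  qed
  have "1 \<le> L^2" using L by (simp add: one_le_power)
  have "0 < ln (ln X)" using L unfolding L_def by simp
  then have "real (Jcal X M) \<le> 2 + 10 powr (-M) * L^2"
    unfolding L_def by (rule Jcal_le) (use small in \<open>simp add: L_def\<close>)
  also have "\<dots> \<le> (2 + 10 powr (-M)) * L^2"
    using \<open>1 \<le> L^2\<close> by (simp add: algebra_simps)
  finally have J: "real (Jcal X M) \<le> (2 + 10 powr (-M)) * L^2" .
  have "real (card {p\<in>S0 k a t \<sigma> X M N. p < Z})
      \<le> (\<Sum>l=1..Jcal X M. real (card {n\<in>{..<Z}. h_idx X N 1 < \<bar>aG k a t \<sigma> X 1 l n\<bar>}))"
    unfolding of_nat_sum[symmetric] of_nat_le_iff by (rule card_S0_le)
  also have "\<dots> \<le> (\<Sum>l=1..Jcal X M. B)"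
    using card by (intro sum_mono) simp
  also have "\<dots> \<le> (2 + 10 powr (-M)) * L^2 * B"
    using J \<open>0 \<le> B\<close> by (simp add: mult_right_mono)
  finally have S0: "real (card {p\<in>S0 k a t \<sigma> X M N. p < Z}) \<le> (2 + 10 powr (-M)) * L^2 * B" .
  have "(\<Sum>p\<in>{p. p \<in> S0 k a t \<sigma> X M N \<and> real p \<le> 2 * X}. ln (real p) * \<Phi> (real p / X))
      \<le> ln (2*X) * real (card {p\<in>S0 k a t \<sigma> X M N. p < Z})"
    unfolding Z_def using X by (intro sum_ln_Phi_le \<Phi>) (auto simp: S0_def)
  also have "\<dots> \<le> ln (2*X) * ((2 + 10 powr (-M)) * L^2) * B"
    using mult_left_mono[OF S0 \<open>0 \<le> ln (2*X)\<close>] by (simp add: mult.assoc)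
  also have "\<dots> \<le> X * exp (- (L^2))" using large unfolding B_def .
  finally show ?thesis .
qed

lemma eventually_large_X:
  fixes c K D :: real
  shows "\<forall>\<^sub>F X in at_top. 3 \<le> X \<and> 100 \<le> ln (ln X) \<and> D \<le> (ln (ln X))^2 \<and>
      4 * ln (ln X / ln 2 + 1) + 5 \<le> 10 * ln (ln X) \<and>
      ln (2*X) * (K * (ln (ln X))^2)
        * (2*X * exp 24 * exp (-3 * (ln (ln X))^2) + exp ((ln (ln X))^2 * c / 4) * sqrt X)
      \<le> X * exp (- ((ln (ln X))^2))"
proof -
  have "\<forall>\<^sub>F X in at_top. 3 \<le> (X::real)" "\<forall>\<^sub>F X in at_top. 100 \<le> ln (ln (X::real))"
    "\<forall>\<^sub>F X in at_top. D \<le> (ln (ln (X::real)))^2"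
    "\<forall>\<^sub>F X in at_top. 4 * ln (ln X / ln 2 + 1) + 5 \<le> 10 * ln (ln (X::real))"
    "\<forall>\<^sub>F X in at_top. ln (2*X) * (K * (ln (ln X))^2)
        * (2*X * exp 24 * exp (-3 * (ln (ln X))^2) + exp ((ln (ln X))^2 * c / 4) * sqrt X)
      \<le> X * exp (- ((ln (ln (X::real)))^2))"
    by real_asymp+
  then show ?thesis by (intro eventually_conj)
qed

lemma sum_S0_eventually_le:
  fixes \<Phi> :: "real \<Rightarrow> real" and k :: nat and a :: "nat \<Rightarrow> real" and M N :: real
  assumes a: "\<forall>m\<in>{1..k}. 0 \<le> a m" and N: "(25000 * (\<Sum>m=1..k. a m)^2 + 24) / 2 \<le> N"
    and \<Phi>: "\<forall>x. 0 \<le> \<Phi> x" "\<forall>x. \<Phi> x \<le> 1" "\<forall>x. 3/2 < x \<longrightarrow> \<Phi> x = 0"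
  shows "\<forall>\<^sub>F X in at_top. \<forall>t \<sigma>.
           (\<Sum>p\<in>{p. p \<in> S0 k a t \<sigma> X M N \<and> real p \<le> 2 * X}. ln (real p) * \<Phi> (real p / X))
             \<le> X * exp (- (ln (ln X))\<^sup>2)"
proof -
  define A where "A = (\<Sum>m=1..k. a m)"
  define D where "D = 10 powr (-M)"
  have "0 \<le> (25000 * A^2 + 24) / 2" by simp
  then have N0: "0 \<le> N" using N unfolding A_def by linarith
  have "25000 * A^2 \<le> exp (25000 * A^2)" using exp_ge_add_one_self[of "25000 * A^2"] by linarith
  also have "\<dots> \<le> exp (2*N - 24)" using N unfolding A_def by simp
  also have "\<dots> = exp (-24) * exp (2*N)" by (simp add: exp_add[symmetric])
  finally have NA: "25000 * A^2 / exp (2*N) \<le> exp (-24)" by (simp add: divide_le_eq)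
  show ?thesis
    using eventually_large_X[of "1 / D" "2 + D" "ln (max 1 A)"]
  proof eventually_elim
    case (elim X)
    then have "1 / (ln (ln X))^2 \<le> D"
      by (simp add: D_def divide_le_eq mult.commute)
    then show ?case
      using sum_S0_le[OF a _ _ _ _ N0 NA[unfolded A_def] _ \<Phi>] elim by (simp add: D_def A_def)
  qed
qed

lemma bump_le_one:
  fixes \<Phi> :: "real \<Rightarrow> real"
  assumes "\<forall>x. (1/4 \<le> x \<and> x \<le> 1/2) \<or> (1 \<le> x \<and> x \<le> 3/2) \<longrightarrow> \<Phi> x \<le> 1"
    and "\<forall>x. 1/2 \<le> x \<and> x \<le> 1 \<longrightarrow> \<Phi> x = 1"
    and "\<forall>x. \<not> (1/4 \<le> x \<and> x \<le> 3/2) \<longrightarrow> \<Phi> x = 0"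
  shows "\<Phi> x \<le> 1"
proof (cases "1/4 \<le> x \<and> x \<le> 3/2")
  case True
  then have "(1/4 \<le> x \<and> x \<le> 1/2) \<or> (1/2 \<le> x \<and> x \<le> 1) \<or> (1 \<le> x \<and> x \<le> 3/2)" by linarith
  then show ?thesis using assms(1,2) by (metis order_refl)
qed (use assms(3) in simp)

text \<open>The bound is uniform in \<open>t\<close> and \<open>\<sigma>\<close>.\<close>
theorem lemma3p1:
  fixes \<Phi> :: "real \<Rightarrow> real"
  assumes smooth: "smooth_fun \<Phi>"
    and nonneg: "\<forall>x. 0 \<le> \<Phi> x"
    and le1: "\<forall>x. (1/4 \<le> x \<and> x \<le> 1/2) \<or> (1 \<le> x \<and> x \<le> 3/2) \<longrightarrow> \<Phi> x \<le> 1"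
    and eq1: "\<forall>x. 1/2 \<le> x \<and> x \<le> 1 \<longrightarrow> \<Phi> x = 1"
    and zero: "\<forall>x. \<not> (1/4 \<le> x \<and> x \<le> 3/2) \<longrightarrow> \<Phi> x = 0"
  shows "\<forall>(k::nat) (a::nat \<Rightarrow> real). k \<ge> 1 \<and> (\<forall>m\<in>{1..k}. a m > 0) \<longrightarrow>
    (\<forall>M::real. \<exists>N0::real. \<forall>N\<ge>N0. \<exists>C::real.
      \<forall>Q::real. \<forall>\<sigma>::real. Q > 0 \<and> \<sigma> \<ge> 1/2 \<longrightarrow>
        (\<exists>X0::real. \<forall>X\<ge>X0. \<forall>t::nat \<Rightarrow> real.
          (\<forall>m\<in>{1..k}. \<bar>t m\<bar> \<le> X powr Q) \<longrightarrow>
          (\<Sum>p\<in>{p. p \<in> S0 k a t \<sigma> X M N \<and> real p \<le> 2 * X}. ln (real p) * \<Phi> (real p / X))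
            \<le> C * X * exp (- (ln (ln X))\<^sup>2)))"
proof (intro allI impI)
  fix k :: nat and a :: "nat \<Rightarrow> real" and M :: real
  assume "k \<ge> 1 \<and> (\<forall>m\<in>{1..k}. a m > 0)"
  then have a: "\<forall>m\<in>{1..k}. 0 \<le> a m" by (simp add: less_imp_le)
  have \<Phi>_le_1: "\<forall>x. \<Phi> x \<le> 1" using bump_le_one[OF le1 eq1 zero] by blast
  have \<Phi>_vanishes: "\<forall>x. 3/2 < x \<longrightarrow> \<Phi> x = 0" using zero by force
  have bound: "\<exists>X0. \<forall>X\<ge>X0. \<forall>t. (\<forall>m\<in>{1..k}. \<bar>t m\<bar> \<le> X powr Q) \<longrightarrow>
      (\<Sum>p\<in>{p. p \<in> S0 k a t \<sigma> X M N \<and> real p \<le> 2 * X}. ln (real p) * \<Phi> (real p / X))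
        \<le> 1 * X * exp (- (ln (ln X))\<^sup>2)"
    if N: "(25000 * (\<Sum>m=1..k. a m)^2 + 24) / 2 \<le> N" for N Q \<sigma>
  proof -
    obtain X0 where "\<forall>X\<ge>X0. \<forall>t \<sigma>.
        (\<Sum>p\<in>{p. p \<in> S0 k a t \<sigma> X M N \<and> real p \<le> 2 * X}. ln (real p) * \<Phi> (real p / X))
          \<le> X * exp (- (ln (ln X))\<^sup>2)"
      using sum_S0_eventually_le[OF a N nonneg \<Phi>_le_1 \<Phi>_vanishes]
      unfolding eventually_at_top_linorder by blast
    then show ?thesis by (intro exI[of _ X0]) simp
  qed
  show "\<exists>N0. \<forall>N\<ge>N0. \<exists>C. \<forall>Q \<sigma>. Q > 0 \<and> \<sigma> \<ge> 1/2 \<longrightarrow> (\<exists>X0. \<forall>X\<ge>X0. \<forall>t.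
          (\<forall>m\<in>{1..k}. \<bar>t m\<bar> \<le> X powr Q) \<longrightarrow>
          (\<Sum>p\<in>{p. p \<in> S0 k a t \<sigma> X M N \<and> real p \<le> 2 * X}. ln (real p) * \<Phi> (real p / X))
            \<le> C * X * exp (- (ln (ln X))\<^sup>2))"
    by (rule exI[of _ "(25000 * (\<Sum>m=1..k. a m)^2 + 24) / 2"], intro allI impI,
        rule exI[of _ "1::real"], intro allI impI, rule bound)
qed

end
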